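(* Let $n$ be a non-negative integer and $r,s\in\mathbb{C}\setminus\mathbb{Z}^{-}$ with $s\ne0$ and $r-s\notin\mathbb{Z}^{-}$. Then \[ \sum_{k=0}^{n}(-1)^{k}\frac{\binom{n}{k}}{\binom{k+r}{s}}H_k=H_n\left(\frac{s}{r-s+1}\frac{1}{\binom{n+r}{r-s+1}}-\frac{1}{\binom{r}{s}}\right)+s\sum_{k=0}^{n-1}\frac{H_{n-1-k}}{(k+s)\binom{r+k+1}{r-s+1}}. \]
   Context: $\mathbb{Z}^{-}$ denotes the set of negative integers. For complex $z$ not a negative integer, $H_z=\psi(z+1)+\gamma$; for integers $n\ge0$, $H_n=\sum_{j=1}^n1/j$. Binomial coefficients with complex entries: $\binom{x}{y}=\frac{\Gamma(x+1)}{\Gamma(y+1)\Gamma(x-y+1)}$. *)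

theory Defs
  imports "HOL-Analysis.Analysis"
begin

definition cbinom :: "complex \<Rightarrow> complex \<Rightarrow> complex" where
  "cbinom x y = Gamma (x + 1) / (Gamma (y + 1) * Gamma (x - y + 1))"

definition negInts :: "complex set" where
  "negInts = {of_int m | m. m < 0}"

end

theory Submission
  imports Defs
begin

(*
  Put a = r - s + 1 and b = r + 1.  Through the Gamma function,
  1 / C(k + r, s) = (a)_k / ((b)_k C(r, s)), so the left-hand side is C(r, s)^-1 times an
  alternating binomial sum of t_k H_k with t_k = (a)_k / (b)_k.  For every sequence t with
  binomial transform T_k = sum_j (-1)^j C(k, j) t_j,
    sum_k (-1)^k C(n, k) t_k H_k = H_n (T_n - t_0) + sum_{k<n} H_{n-1-k} (T_k - T_{k+1}),
  which follows from C(n, j) (H_n - H_j) = sum_{k<n} C(k, j) / (n - k) by summation by parts.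
  Chu-Vandermonde gives T_k = (s)_k / (b)_k, and the absorption identity
  a C(r, a) = s C(r, s) turns T_n and T_k - T_{k+1} into the two terms on the right.
*)

lemma of_nat_choose_mult_harm_diff:
  "of_nat (n choose j) * (harm n - harm j)
     = (\<Sum>k<n. of_nat (k choose j) / of_nat (n - k) :: 'a :: real_normed_field)"
proof (induction n arbitrary: j)
  case 0
  then show ?case by (cases j) (auto simp: harm_def)
next
  case (Suc n)
  have shift: "(\<Sum>k<Suc n. of_nat (k choose j) / of_nat (Suc n - k) :: 'a)
     = of_nat (0 choose j) / of_nat (Suc n)
       + (\<Sum>k<n. of_nat (Suc k choose j) / of_nat (n - k))"
    by (subst sum.lessThan_Suc_shift) simp
  show ?case
  proof (cases j)
    case 0
    then show ?thesis using Suc.IH[of 0] shift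
      by (simp add: harm_Suc harm_def field_simps)
  next
    case (Suc i)
    have pascal: "(\<Sum>k<n. of_nat (Suc k choose Suc i) / of_nat (n - k) :: 'a)
       = (\<Sum>k<n. of_nat (k choose i) / of_nat (n - k))
         + (\<Sum>k<n. of_nat (k choose Suc i) / of_nat (n - k))"
      by (simp add: sum.distrib add_divide_distrib)
    have absorb: "(of_nat (Suc n choose Suc i) :: 'a) / of_nat (Suc n)
        = of_nat (n choose i) / of_nat (Suc i)"
      using Suc_times_binomial_eq[of n i]
      by (simp add: field_simps del: of_nat_Suc binomial_Suc_Suc flip: of_nat_mult)
    have "of_nat (Suc n choose j) * (harm (Suc n) - harm j :: 'a)
        = (of_nat (n choose i) + of_nat (n choose Suc i)) * (harm n - harm i)
          - of_nat (n choose Suc i) / of_nat (Suc i)"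
      using absorb unfolding \<open>j = Suc i\<close> harm_Suc binomial_Suc_Suc of_nat_add
      by (simp add: field_simps del: of_nat_Suc)
    also have "\<dots> = of_nat (n choose i) * (harm n - harm i)
        + of_nat (n choose Suc i) * (harm n - harm (Suc i))"
      by (simp add: harm_Suc field_simps)
    also have "\<dots> = (\<Sum>k<Suc n. of_nat (k choose j) / of_nat (Suc n - k))"
      using Suc.IH[of i] Suc.IH[of "Suc i"] shift pascal \<open>j = Suc i\<close> by simp
    finally show ?thesis .
  qed
qed

definition binomial_transform :: "(nat \<Rightarrow> 'a :: comm_ring_1) \<Rightarrow> nat \<Rightarrow> 'a" where
  "binomial_transform t k = (\<Sum>j\<le>k. (-1)^j * of_nat (k choose j) * t j)"

lemma binomial_transform_0 [simp]: "binomial_transform t 0 = t 0"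
  by (simp add: binomial_transform_def)

lemma sum_binomial_harm_eq:
  fixes t :: "nat \<Rightarrow> 'a :: real_normed_field"
  shows "(\<Sum>k\<le>n. (-1)^k * of_nat (n choose k) * t k * harm k)
     = harm n * binomial_transform t n - (\<Sum>k<n. binomial_transform t k / of_nat (n - k))"
proof -
  have "(\<Sum>k<n. binomial_transform t k / of_nat (n - k))
      = (\<Sum>k<n. \<Sum>j\<le>n. (-1)^j * t j * (of_nat (k choose j) / of_nat (n - k)))"
  proof (rule sum.cong [OF refl])
    fix k assume "k \<in> {..<n}"
    then have "binomial_transform t k = (\<Sum>j\<le>n. (-1)^j * of_nat (k choose j) * t j)"
      unfolding binomial_transform_def by (intro sum.mono_neutral_left) auto
    then show "binomial_transform t k / of_nat (n - k)
        = (\<Sum>j\<le>n. (-1)^j * t j * (of_nat (k choose j) / of_nat (n - k)))"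
      by (simp add: sum_divide_distrib mult_ac)
  qed
  also have "\<dots> = (\<Sum>j\<le>n. (-1)^j * t j * (\<Sum>k<n. of_nat (k choose j) / of_nat (n - k)))"
    by (subst sum.swap) (simp add: sum_distrib_left)
  also have "\<dots> = (\<Sum>j\<le>n. (-1)^j * t j * (of_nat (n choose j) * (harm n - harm j)))"
    by (simp add: of_nat_choose_mult_harm_diff)
  finally show ?thesis
    by (simp add: binomial_transform_def sum_distrib_left algebra_simps flip: sum_subtractf)
qed

lemma sum_harm_mult_diff:
  fixes P :: "nat \<Rightarrow> 'a :: real_normed_field"
  shows "(\<Sum>k<n. harm (n - 1 - k) * (P k - P (Suc k)))
     = harm n * P 0 - (\<Sum>k<n. P k / of_nat (n - k))"
proof -
  have "(\<Sum>k<n. harm (n - 1 - k) * P (Suc k))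
      = (\<Sum>k<Suc n. harm (n - k) * P k) - harm n * P 0"
    by (subst sum.lessThan_Suc_shift) (simp add: diff_diff_add)
  also have "\<dots> = (\<Sum>k<n. harm (n - 1 - k) * P k + P k / of_nat (n - k)) - harm n * P 0"
  proof -
    have "harm (n - k) * P k = harm (n - 1 - k) * P k + P k / of_nat (n - k)" if "k < n" for k
    proof -
      from that have "n - k = Suc (n - 1 - k)" by simp
      then show ?thesis by (simp add: harm_Suc field_simps del: of_nat_Suc)
    qed
    then show ?thesis by (simp add: harm_def)
  qed
  finally show ?thesis
    by (simp add: right_diff_distrib sum_subtractf sum.distrib)
qed

lemma sum_alternating_binomial_harm:
  fixes t :: "nat \<Rightarrow> 'a :: real_normed_field"
  defines "T \<equiv> binomial_transform t"
  shows "(\<Sum>k\<le>n. (-1)^k * of_nat (n choose k) * t k * harm k)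
     = harm n * (T n - t 0) + (\<Sum>k<n. harm (n - 1 - k) * (T k - T (Suc k)))"
  unfolding T_def sum_binomial_harm_eq sum_harm_mult_diff by (simp add: algebra_simps)

lemma binomial_transform_pochhammer_ratio:
  fixes a b :: "'a :: field_char_0"
  assumes "pochhammer b n \<noteq> 0"
  shows "binomial_transform (\<lambda>k. pochhammer a k / pochhammer b k) n
     = pochhammer (b - a) n / pochhammer b n"
proof -
  have "(-1)^k * of_nat (n choose k) = pochhammer (- of_nat n) k / (fact k :: 'a)" for k
    using gbinomial_pochhammer[of "of_nat n :: 'a" k] by (simp add: binomial_gbinomial)
  then have "binomial_transform (\<lambda>k. pochhammer a k / pochhammer b k) n
      = (\<Sum>k=0..n. (pochhammer a k * pochhammer (- of_nat n) k)
          / (of_nat (fact k) * pochhammer b k))"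
    unfolding binomial_transform_def atMost_atLeast0 by (intro sum.cong) auto
  also have "\<dots> = pochhammer (b - a) n / pochhammer b n"
    using assms by (intro Vandermonde_pochhammer) (auto simp: pochhammer_eq_0_iff)
  finally show ?thesis .
qed

lemma pochhammer_ratio_diff:
  fixes a b :: "'a :: field"
  assumes "pochhammer b (Suc k) \<noteq> 0"
  shows "pochhammer a k / pochhammer b k - pochhammer a (Suc k) / pochhammer b (Suc k)
     = (b - a) * pochhammer a k / pochhammer b (Suc k)"
proof -
  from assms have "pochhammer b k \<noteq> 0" "b + of_nat k \<noteq> 0"
    by (simp_all add: pochhammer_rec')
  then show ?thesis by (simp add: pochhammer_rec' divide_simps) (simp add: algebra_simps)
qed

lemma plus_one_in_nonpos_Ints_iff: "x + 1 \<in> \<int>\<^sub>\<le>\<^sub>0 \<longleftrightarrow> x \<in> negInts"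
proof
  assume "x + 1 \<in> \<int>\<^sub>\<le>\<^sub>0"
  then obtain m where "x + 1 = of_int m" "m \<le> 0" by (auto elim: nonpos_Ints_cases)
  then have "x = of_int (m - 1)" "m - 1 < 0" by (auto simp: algebra_simps)
  then show "x \<in> negInts" unfolding negInts_def by blast
next
  assume "x \<in> negInts"
  then obtain m where "x = of_int m" "m < 0" unfolding negInts_def by blast
  then show "x + 1 \<in> \<int>\<^sub>\<le>\<^sub>0" using nonpos_Ints_of_int [of "m + 1"] by simp
qed

lemma nonpos_Ints_eq_insert_negInts: "\<int>\<^sub>\<le>\<^sub>0 = insert 0 negInts"
proof (intro set_eqI iffI)
  fix x :: complex
  assume "x \<in> \<int>\<^sub>\<le>\<^sub>0"
  then obtain m where "x = of_int m" "m \<le> 0" by (auto elim: nonpos_Ints_cases)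
  then show "x \<in> insert 0 negInts" unfolding negInts_def by (cases "m = 0") auto
next
  fix x :: complex
  assume "x \<in> insert 0 negInts"
  then show "x \<in> \<int>\<^sub>\<le>\<^sub>0" unfolding negInts_def by (auto intro: nonpos_Ints_of_int)
qed

lemma cbinom_add_of_nat:
  assumes "x + 1 \<notin> \<int>\<^sub>\<le>\<^sub>0" and "x - y + 1 \<notin> \<int>\<^sub>\<le>\<^sub>0"
  shows "cbinom (x + of_nat k) y
    = cbinom x y * pochhammer (x + 1) k / pochhammer (x - y + 1) k"
proof -
  have "cbinom (x + of_nat k) y
      = Gamma ((x + 1) + of_nat k) / (Gamma (y + 1) * Gamma ((x - y + 1) + of_nat k))"
    by (simp add: cbinom_def algebra_simps)
  also have "\<dots> = Gamma (x + 1) * pochhammer (x + 1) k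
      / (Gamma (y + 1) * (Gamma (x - y + 1) * pochhammer (x - y + 1) k))"
    using assms by (simp add: pochhammer_Gamma Gamma_nonzero)
  finally show ?thesis by (simp add: cbinom_def)
qed

lemma inverse_cbinom_add_of_nat:
  assumes "x + 1 \<notin> \<int>\<^sub>\<le>\<^sub>0" and "x - y + 1 \<notin> \<int>\<^sub>\<le>\<^sub>0"
  shows "inverse (cbinom (x + of_nat k) y)
    = pochhammer (x - y + 1) k / pochhammer (x + 1) k / cbinom x y"
  by (simp add: cbinom_add_of_nat [OF assms] mult.commute)

(* Absorption y C(x, y) = (x - y + 1) C(x, y - 1), read through the symmetry
   C(x, y - 1) = C(x, x - y + 1). *)
lemma cbinom_absorption_complement:
  assumes "y \<notin> \<int>\<^sub>\<le>\<^sub>0" and "x - y + 1 \<notin> \<int>\<^sub>\<le>\<^sub>0"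
  shows "(x - y + 1) * cbinom x (x - y + 1) = y * cbinom x y"
proof -
  define c where "c = x - y + 1"
  have nonzero: "y \<noteq> 0" "c \<noteq> 0"
    using assms unfolding c_def by auto
  have "cbinom x c = Gamma (x + 1) / (Gamma (c + 1) * Gamma y)"
    by (simp add: cbinom_def c_def)
  also have "Gamma (c + 1) = c * Gamma c"
    using Gamma_plus1 [OF assms(2)] by (simp add: c_def)
  finally have "c * cbinom x c = Gamma (x + 1) / (Gamma c * Gamma y)"
    using nonzero by simp
  also have "\<dots> = y * cbinom x y"
    using Gamma_plus1 [OF assms(1)] nonzero by (simp add: cbinom_def c_def)
  finally show ?thesis unfolding c_def .
qed

context
  fixes x y :: complex
  assumes x: "x + 1 \<notin> \<int>\<^sub>\<le>\<^sub>0" and y: "y \<notin> \<int>\<^sub>\<le>\<^sub>0" and xy: "x - y + 1 \<notin> \<int>\<^sub>\<le>\<^sub>0"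
begin

lemma cbinom_complement_add_of_nat:
  "cbinom (x + of_nat k) (x - y + 1)
     = cbinom x (x - y + 1) * pochhammer (x + 1) k / pochhammer y k"
  using cbinom_add_of_nat [OF x, of "x - y + 1" k] y by simp

lemma inverse_cbinom_complement_add_of_nat:
  "y / (x - y + 1) / cbinom (x + of_nat n) (x - y + 1)
     = pochhammer y n / pochhammer (x + 1) n / cbinom x y"
proof -
  have "y / (x - y + 1) / cbinom (x + of_nat n) (x - y + 1)
      = y * pochhammer y n
        / ((x - y + 1) * cbinom x (x - y + 1) * pochhammer (x + 1) n)"
    by (simp add: cbinom_complement_add_of_nat mult_ac)
  also have "\<dots> = pochhammer y n / pochhammer (x + 1) n / cbinom x y"
    using y by (auto simp: cbinom_absorption_complement [OF y xy])
  finally show ?thesis .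
qed

lemma inverse_cbinom_complement_add_Suc:
  "y / ((of_nat k + y) * cbinom (x + of_nat k + 1) (x - y + 1))
     = (pochhammer y k / pochhammer (x + 1) k
        - pochhammer y (Suc k) / pochhammer (x + 1) (Suc k)) / cbinom x y"
proof -
  have "y + of_nat k \<noteq> 0"
    using y pochhammer_eq_0_imp_nonpos_Int [of y "Suc k"] by (auto simp: pochhammer_rec')
  then have "(of_nat k + y) * cbinom (x + of_nat k + 1) (x - y + 1)
      = cbinom x (x - y + 1) * pochhammer (x + 1) (Suc k) / pochhammer y k"
    using cbinom_complement_add_of_nat [of "Suc k"] pochhammer_rec' [of y k]
    by (simp add: ac_simps)
  then have "y / ((of_nat k + y) * cbinom (x + of_nat k + 1) (x - y + 1))
      = (x - y + 1) * y * pochhammer y k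
        / ((x - y + 1) * cbinom x (x - y + 1) * pochhammer (x + 1) (Suc k))"
    using xy by auto
  also have "\<dots> = (x - y + 1) * pochhammer y k / pochhammer (x + 1) (Suc k) / cbinom x y"
    using y by (auto simp: cbinom_absorption_complement [OF y xy])
  also have "(x - y + 1) * pochhammer y k / pochhammer (x + 1) (Suc k)
      = pochhammer y k / pochhammer (x + 1) k
        - pochhammer y (Suc k) / pochhammer (x + 1) (Suc k)"
  proof -
    have "pochhammer (x + 1) (Suc k) \<noteq> 0"
      using x pochhammer_eq_0_imp_nonpos_Int by blast
    from pochhammer_ratio_diff [OF this, of y] show ?thesis
      by (simp add: algebra_simps)
  qed
  finally show ?thesis .
qed

end

theorem theorem13:
  fixes n :: nat and r s :: complex
  assumes "r \<notin> negInts" and "s \<notin> negInts" and "s \<noteq> 0" and "r - s \<notin> negInts"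
  shows "(\<Sum>k=0..n. (-1)^k * of_nat (n choose k) / cbinom (of_nat k + r) s * harm k)
    = harm n * (s / (r - s + 1) * (1 / cbinom (of_nat n + r) (r - s + 1)) - 1 / cbinom r s)
      + s * (\<Sum>k=0..<n. harm (n - 1 - k) / ((of_nat k + s) * cbinom (r + of_nat k + 1) (r - s + 1)))"
proof -
  have r: "r + 1 \<notin> \<int>\<^sub>\<le>\<^sub>0" and rs: "r - s + 1 \<notin> \<int>\<^sub>\<le>\<^sub>0"
    using assms by (simp_all only: plus_one_in_nonpos_Ints_iff) simp_all
  have s: "s \<notin> \<int>\<^sub>\<le>\<^sub>0"
    using assms by (simp add: nonpos_Ints_eq_insert_negInts)
  define t where "t = (\<lambda>k. pochhammer (r - s + 1) k / pochhammer (r + 1) k)"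
  define T where "T = (\<lambda>k. pochhammer s k / pochhammer (r + 1) k)"
  have transform: "binomial_transform t = T"
    using binomial_transform_pochhammer_ratio [of "r + 1" _ "r - s + 1"] r
      pochhammer_eq_0_imp_nonpos_Int [of "r + 1"]
    by (fastforce simp: T_def t_def)
  have head: "s / (r - s + 1) * (1 / cbinom (of_nat n + r) (r - s + 1)) = T n / cbinom r s"
    using inverse_cbinom_complement_add_of_nat [OF r s rs, of n] by (simp add: T_def add.commute)
  have tail: "s * (h / ((of_nat k + s) * cbinom (r + of_nat k + 1) (r - s + 1)))
      = h * (T k - T (Suc k)) / cbinom r s" for h k
  proof -
    have swap: "s * (h / z) = h * (s / z)" for z :: complex
      by (simp add: mult.commute)
    show ?thesis
      unfolding swap inverse_cbinom_complement_add_Suc [OF r s rs] T_def by simp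
  qed
  have "(\<Sum>k=0..n. (-1)^k * of_nat (n choose k) / cbinom (of_nat k + r) s * harm k)
      = (\<Sum>k\<le>n. (-1)^k * of_nat (n choose k) * t k * harm k) / cbinom r s"
    unfolding atMost_atLeast0 sum_divide_distrib
    by (intro sum.cong refl)
      (simp only: divide_inverse add.commute [of _ r] inverse_cbinom_add_of_nat [OF r rs]
        t_def mult_ac)
  also have "\<dots>
      = (harm n * (T n - 1) + (\<Sum>k<n. harm (n - 1 - k) * (T k - T (Suc k)))) / cbinom r s"
    using sum_alternating_binomial_harm [of n t, unfolded transform] by (simp add: t_def)
  also have "\<dots>
      = harm n * (s / (r - s + 1) * (1 / cbinom (of_nat n + r) (r - s + 1)) - 1 / cbinom r s)
        + s * (\<Sum>k=0..<n.
          harm (n - 1 - k) / ((of_nat k + s) * cbinom (r + of_nat k + 1) (r - s + 1)))"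
    unfolding head atLeast0LessThan sum_distrib_left tail
    by (simp add: sum_divide_distrib add_divide_distrib diff_divide_distrib right_diff_distrib)
  finally show ?thesis .
qed

end
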